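(* Let $n\geq0$ be an integer and $i\in\{1,2,3\}$. Then $\dim_{\mathbb C}\mathscr M_n(x_i)=0$ if $n<t_i$, and $\dim_{\mathbb C}\mathscr M_n(x_i)=2(n-t_i+1)$ if $n\geq t_i$.
   Context: Fix real numbers $k_1,k_2,k_3$. For $i=1,2,3$ let $R_i$ be the operator on functions on $\mathbb R^3$ replacing $x_i$ by $-x_i$, and $T_if=\frac{\partial f}{\partial x_i}+k_i\frac{f-R_if}{x_i}$ (Dunkl operators). Let $\sigma_1=\begin{pmatrix}0&1\\1&0\end{pmatrix}$, $\sigma_2=\begin{pmatrix}0&-\sqrt{-1}\\ \sqrt{-1}&0\end{pmatrix}$, $\sigma_3=\begin{pmatrix}1&0\\0&-1\end{pmatrix}$, and let $e_i$ act on $\mathbb C^2$ by $\sigma_i$. Tensor products are over $\mathbb R$; $\mathbb R[\cdots]_m$ denotes homogeneous polynomials of degree $m$. Let $\mathbf D=e_1\otimes T_1+e_2\otimes T_2+e_3\otimes T_3$ and $\mathscr M_n=\ker(\mathbf D|_{\mathbb C^2\otimes\mathbb R[x_1,x_2,x_3]_n})$. For $i=1,2,3$ set $t_i=-2k_i$ if $2k_i$ is an odd negative integer, and $t_i=\infty$ otherwise. For $i=1,2,3$, $\mathscr M_n(x_i)=\mathscr M_n\cap\bigoplus_{j=t_i}^n\mathbb C^2\otimes(x_i^j\cdot\mathbb R[x_p,x_q]_{n-j})$ where $\{p,q\}=\{1,2,3\}\setminus\{i\}$, interpreted as $\{0\}$ if $n<t_i$. *)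

theory Defs
  imports Complex_Main "HOL-Library.Function_Algebras" "HOL-Library.Extended_Nat"
begin

(* Monomials x1^a x2^b x3^c are encoded by their exponent triple (a,b,c). *)
type_synonym mono = "nat \<times> nat \<times> nat"

(* An element of C^2 \<otimes>_R R[x1,x2,x3] is encoded by its coefficient function:
   F j m = the j-th C^2-coordinate (j = 0,1) of the coefficient of the monomial m. *)
type_synonym spinpoly = "nat \<Rightarrow> mono \<Rightarrow> complex"

definition deg :: "mono \<Rightarrow> nat" where
  "deg m = (case m of (a, b, c) \<Rightarrow> a + b + c)"

definition expo :: "nat \<Rightarrow> mono \<Rightarrow> nat" where
  "expo i m = (case m of (a, b, c) \<Rightarrow> if i = 1 then a else if i = 2 then b else c)"

definition incr :: "nat \<Rightarrow> mono \<Rightarrow> mono" where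
  "incr i m = (case m of (a, b, c) \<Rightarrow>
     if i = 1 then (Suc a, b, c) else if i = 2 then (a, Suc b, c) else (a, b, Suc c))"

(* T_i (x_i^a * rest) = (a + k_i (1 - (-1)^a)) x_i^(a-1) * rest *)
definition dunkl_factor :: "real \<Rightarrow> nat \<Rightarrow> complex" where
  "dunkl_factor k a = of_nat a + complex_of_real k * (1 - (-1) ^ a)"

definition dunkl :: "(nat \<Rightarrow> real) \<Rightarrow> nat \<Rightarrow> (mono \<Rightarrow> complex) \<Rightarrow> (mono \<Rightarrow> complex)" where
  "dunkl k i p m = dunkl_factor (k i) (Suc (expo i m)) * p (incr i m)"

(* D = e1 \<otimes> T1 + e2 \<otimes> T2 + e3 \<otimes> T3 with e_i acting by the Pauli matrices \<sigma>_i: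
   \<sigma>1 (u,v) = (v,u), \<sigma>2 (u,v) = (-i v, i u), \<sigma>3 (u,v) = (u,-v) *)
definition Dirac :: "(nat \<Rightarrow> real) \<Rightarrow> spinpoly \<Rightarrow> spinpoly" where
  "Dirac k F j =
     (if j = 0 then (\<lambda>m. dunkl k 1 (F 1) m - \<i> * dunkl k 2 (F 1) m + dunkl k 3 (F 0) m)
      else if j = 1 then (\<lambda>m. dunkl k 1 (F 0) m + \<i> * dunkl k 2 (F 0) m - dunkl k 3 (F 1) m)
      else (\<lambda>m. 0))"

definition spin_hom :: "nat \<Rightarrow> spinpoly set" where
  "spin_hom n = {F. \<forall>j m. F j m \<noteq> 0 \<longrightarrow> j < 2 \<and> deg m = n}"

definition monogenic :: "(nat \<Rightarrow> real) \<Rightarrow> nat \<Rightarrow> spinpoly set" where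
  "monogenic k n = {F \<in> spin_hom n. Dirac k F = (\<lambda>j m. 0)}"

definition t_param :: "real \<Rightarrow> enat" where
  "t_param k = (if \<exists>m::nat. odd m \<and> 2 * k = - real m then enat (nat (- \<lfloor>2 * k\<rfloor>)) else \<infinity>)"

definition monogenic_x :: "(nat \<Rightarrow> real) \<Rightarrow> nat \<Rightarrow> nat \<Rightarrow> spinpoly set" where
  "monogenic_x k i n = {F \<in> monogenic k n. \<forall>j m. F j m \<noteq> 0 \<longrightarrow> t_param (k i) \<le> enat (expo i m)}"

definition cscale :: "complex \<Rightarrow> spinpoly \<Rightarrow> spinpoly" where
  "cscale c F = (\<lambda>j m. c * F j m)"

definition cdim :: "spinpoly set \<Rightarrow> nat" where
  "cdim S = vector_space.dim cscale S"

end

theory Submission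
  imports Defs
begin

text \<open>
  If 2k_i = -t with t odd, the Dunkl factor a + k_i (1 - (-1)^a) of the x_i-derivative vanishes
  for a > 0 exactly when a = t. At a monomial m the Dirac equation reads
  c_i(m) sigma_i F(x_i m) = - (sum over l \<noteq> i of c_l(m) sigma_l F(x_l m)), and sigma_i is an
  involution; so as long as c_i(m) \<noteq> 0, i.e. above x_i-degree t - 1, it expresses the
  coefficients of x_i-degree d + 1 through those of x_i-degree d. Consequently an element of
  M_n(x_i) is determined by its coefficients of x_i-degree exactly t, and every choice of these
  extends, layer by layer, to an element of M_n(x_i): at x_i-degree t - 1 the equation holds
  automatically, since c_i vanishes there and all other terms involve coefficients of x_i-degree
  t - 1. The free coefficients are the 2(n - t + 1) entries of an element of C^2 tensor the
  homogeneous polynomials of degree n - t in the two other variables.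
  If t_i > n, including t_i = \<infinity>, no monomial of degree n has x_i-degree at least t_i.
\<close>

lemma all_less_2_iff: "(\<forall>j<2. P j) \<longleftrightarrow> P 0 \<and> P (1::nat)"
  by (auto simp: less_2_cases_iff)

lemma sum_fun_apply: "(\<Sum>a\<in>A. f a) x = (\<Sum>a\<in>A. f a x)"
  by (induction A rule: infinite_finite_induct) auto

lemma expo_incr:
  "i \<in> {1,2,3} \<Longrightarrow> l \<in> {1,2,3} \<Longrightarrow> expo i (incr l m) = (if l = i then Suc (expo i m) else expo i m)"
  by (cases m) (auto simp: expo_def incr_def)

lemma deg_incr: "deg (incr l m) = Suc (deg m)"
  by (cases m) (auto simp: deg_def incr_def)

lemma expo_le_deg: "i \<in> {1,2,3} \<Longrightarrow> expo i m \<le> deg m"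
  by (cases m) (auto simp: deg_def expo_def)

definition decr :: "nat \<Rightarrow> mono \<Rightarrow> mono" where
  "decr i m = (case m of (a, b, c) \<Rightarrow>
     if i = 1 then (a - 1, b, c) else if i = 2 then (a, b - 1, c) else (a, b, c - 1))"

lemma decr_incr: "i \<in> {1,2,3} \<Longrightarrow> decr i (incr i m) = m"
  by (cases m) (auto simp: decr_def incr_def)

lemma incr_decr: "i \<in> {1,2,3} \<Longrightarrow> 0 < expo i m \<Longrightarrow> incr i (decr i m) = m"
  by (cases m) (auto simp: decr_def incr_def expo_def)

lemma card_deg_expo_eq:
  assumes "i \<in> {1,2,3}" and "t \<le> n"
  shows "card {m. deg m = n \<and> expo i m = t} = n - t + 1"
proof -
  define lay where "lay a = (if i = 1 then (t, a, n - t - a)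
    else if i = 2 then (a, t, n - t - a) else (a, n - t - a, t))" for a
  have "{m. deg m = n \<and> expo i m = t} = lay ` {0..n - t}"
    using assms by (auto simp: deg_def expo_def lay_def image_iff split: prod.splits)
  moreover have "inj_on lay {0..n - t}"
    using assms by (auto simp: inj_on_def lay_def)
  ultimately show ?thesis by (simp add: card_image)
qed

lemma t_param_eq_enat_iff: "t_param k = enat t \<longleftrightarrow> odd t \<and> 2 * k = - real t"
proof -
  have floor_eq: "\<lfloor>- real m\<rfloor> = - int m" for m :: nat
    using floor_uminus_of_int[of "int m", where 'a = real] by simp
  show ?thesis
    using floor_eq by (auto simp: t_param_def)
qed

lemma dunkl_factor_eq_0_iff:
  "0 < a \<Longrightarrow> dunkl_factor k a = 0 \<longleftrightarrow> odd a \<and> 2 * k = - real a"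
  by (cases "even a") (auto simp: dunkl_factor_def complex_eq_iff)

lemma dunkl_factor_eq_0_iff_t_param:
  "t_param k = enat t \<Longrightarrow> 0 < a \<Longrightarrow> dunkl_factor k a = 0 \<longleftrightarrow> a = t"
  by (auto simp: t_param_eq_enat_iff dunkl_factor_eq_0_iff)

definition pauli :: "nat \<Rightarrow> (nat \<Rightarrow> complex) \<Rightarrow> nat \<Rightarrow> complex" where
  "pauli l v j =
     (if j = 0 then (if l = 1 then v 1 else if l = 2 then - \<i> * v 1 else v 0)
      else if j = 1 then (if l = 1 then v 0 else if l = 2 then \<i> * v 0 else - v 1)
      else 0)"

lemma pauli_cong: "(\<And>j. j < 2 \<Longrightarrow> u j = v j) \<Longrightarrow> pauli l u = pauli l v"
  by (auto simp: pauli_def fun_eq_iff)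

lemma pauli_zero [simp]: "pauli l (\<lambda>_. 0) = (\<lambda>_. 0)"
  by (auto simp: pauli_def fun_eq_iff)

lemma pauli_ge_2: "2 \<le> j \<Longrightarrow> pauli l v j = 0"
  by (simp add: pauli_def)

lemma pauli_eq_iff:
  assumes "l \<in> {1,2,3}"
  shows "(\<forall>j<2. pauli l u j = w j) \<longleftrightarrow> (\<forall>j<2. u j = pauli l w j)"
  using assms unfolding all_less_2_iff by (auto simp: pauli_def complex_eq_iff)

definition dunkl_coeff :: "(nat \<Rightarrow> real) \<Rightarrow> nat \<Rightarrow> mono \<Rightarrow> complex" where
  "dunkl_coeff k l m = dunkl_factor (k l) (Suc (expo l m))"

lemma Dirac_eq_sum:
  "Dirac k F j m = (\<Sum>l\<in>{1,2,3}. dunkl_coeff k l m * pauli l (\<lambda>j'. F j' (incr l m)) j)"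
  by (simp add: Dirac_def dunkl_def dunkl_coeff_def pauli_def algebra_simps)

lemma Dirac_eq_0_if_neighbours_vanish:
  assumes "\<And>l. l \<in> {1,2,3} \<Longrightarrow> dunkl_coeff k l m = 0 \<or> (\<forall>j<2. F j (incr l m) = 0)"
  shows "Dirac k F j m = 0"
proof -
  have "dunkl_coeff k l m * pauli l (\<lambda>j'. F j' (incr l m)) j = 0" if "l \<in> {1,2,3}" for l
    using assms[OF that] pauli_cong[of "\<lambda>j'. F j' (incr l m)" "\<lambda>_. 0" l] by auto
  then show ?thesis unfolding Dirac_eq_sum by (intro sum.neutral) blast
qed

lemma Dirac_add: "Dirac k (F + G) = Dirac k F + Dirac k G"
  by (simp add: Dirac_def dunkl_def fun_eq_iff algebra_simps)

lemma Dirac_zero: "Dirac k 0 = 0"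
  by (simp add: Dirac_def dunkl_def fun_eq_iff)

lemma Dirac_cscale: "Dirac k (cscale c F) = cscale c (Dirac k F)"
  by (simp add: Dirac_def dunkl_def cscale_def fun_eq_iff algebra_simps)

definition dirac_solve :: "(nat \<Rightarrow> real) \<Rightarrow> nat \<Rightarrow> spinpoly \<Rightarrow> mono \<Rightarrow> nat \<Rightarrow> complex" where
  "dirac_solve k i F m = pauli i (\<lambda>j. - (\<Sum>l\<in>{1,2,3} - {i}.
     dunkl_coeff k l m * pauli l (\<lambda>j'. F j' (incr l m)) j) / dunkl_coeff k i m)"

lemma Dirac_eq_0_iff_dirac_solve:
  assumes i: "i \<in> {1,2,3}" and c: "dunkl_coeff k i m \<noteq> 0"
  shows "(\<forall>j<2. Dirac k F j m = 0) \<longleftrightarrow> (\<forall>j<2. F j (incr i m) = dirac_solve k i F m j)"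
proof -
  define R where "R j = (\<Sum>l\<in>{1,2,3} - {i}. dunkl_coeff k l m * pauli l (\<lambda>j'. F j' (incr l m)) j)"
    for j
  have "Dirac k F j m = dunkl_coeff k i m * pauli i (\<lambda>j'. F j' (incr i m)) j + R j" for j
    using i unfolding Dirac_eq_sum R_def by (simp add: sum.remove)
  then have "(\<forall>j<2. Dirac k F j m = 0) \<longleftrightarrow>
      (\<forall>j<2. pauli i (\<lambda>j'. F j' (incr i m)) j = - R j / dunkl_coeff k i m)"
    using c by (simp add: field_simps add_eq_0_iff)
  also have "\<dots> \<longleftrightarrow> (\<forall>j<2. F j (incr i m) = dirac_solve k i F m j)"
    unfolding pauli_eq_iff[OF i] dirac_solve_def R_def by simp
  finally show ?thesis .
qed

lemma dirac_solve_cong: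
  assumes "\<And>l j. l \<in> {1,2,3} \<Longrightarrow> l \<noteq> i \<Longrightarrow> j < 2 \<Longrightarrow> F j (incr l m) = G j (incr l m)"
  shows "dirac_solve k i F m = dirac_solve k i G m"
proof -
  have "pauli l (\<lambda>j. F j (incr l m)) = pauli l (\<lambda>j. G j (incr l m))" if "l \<in> {1,2,3} - {i}" for l
    using that assms by (intro pauli_cong) auto
  then show ?thesis
    unfolding dirac_solve_def by (metis (no_types, lifting) sum.cong)
qed

lemma dirac_solve_zero [simp]: "dirac_solve k i (\<lambda>_ _. 0) m = (\<lambda>_. 0)"
  by (simp add: dirac_solve_def)

primrec propagate :: "(nat \<Rightarrow> real) \<Rightarrow> nat \<Rightarrow> spinpoly \<Rightarrow> nat \<Rightarrow> spinpoly" where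
  "propagate k i g 0 = g"
| "propagate k i g (Suc l) = (\<lambda>j m. dirac_solve k i (propagate k i g l) (decr i m) j)"

text \<open>
  Cutting off at degree n and at the C^2 components does not disturb the Dirac equation, which
  only links degree n - 1 to degree n and never reads components j \<ge> 2.
\<close>
definition monogenic_extension ::
  "(nat \<Rightarrow> real) \<Rightarrow> nat \<Rightarrow> nat \<Rightarrow> nat \<Rightarrow> spinpoly \<Rightarrow> spinpoly" where
  "monogenic_extension k i t n g = (\<lambda>j m.
     if j < 2 \<and> deg m = n \<and> t \<le> expo i m then propagate k i g (expo i m - t) j m else 0)"

interpretation spin: vector_space cscale
  by unfold_locales (auto simp: cscale_def fun_eq_iff algebra_simps)

lemma cdim_eq_0: "S \<subseteq> {0} \<Longrightarrow> cdim S = 0"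
  unfolding cdim_def
  by (rule spin.dim_unique[of "{}"]) (auto simp: spin.span_empty spin.independent_empty)

lemma subspace_supported: "spin.subspace {F. \<forall>j m. F j m \<noteq> 0 \<longrightarrow> Q j m}"
  unfolding spin.subspace_def by (auto simp: cscale_def) (metis add.left_neutral)

lemma subspace_kernel_Dirac: "spin.subspace {F. Dirac k F = 0}"
  unfolding spin.subspace_def by (simp add: Dirac_add Dirac_cscale Dirac_zero)

lemma subspace_monogenic_x: "spin.subspace (monogenic_x k i n)"
proof -
  have "monogenic_x k i n = {F. Dirac k F = 0} \<inter>
      {F. \<forall>j m. F j m \<noteq> 0 \<longrightarrow> j < 2 \<and> deg m = n \<and> t_param (k i) \<le> enat (expo i m)}"
    by (auto simp: monogenic_x_def monogenic_def spin_hom_def zero_fun_def)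
  then show ?thesis
    using spin.subspace_inter[OF subspace_kernel_Dirac subspace_supported] by simp
qed

lemma independent_if_dual_points:
  assumes "finite P" and dual: "\<And>p q. p \<in> P \<Longrightarrow> q \<in> P \<Longrightarrow> b p (fst q) (snd q) = (if p = q then 1 else 0)"
  shows "inj_on b P" and "spin.independent (b ` P)"
proof -
  show inj: "inj_on b P"
    by (rule inj_onI) (metis dual one_neq_zero)
  show "spin.independent (b ` P)"
  proof (rule spin.independent_if_scalars_zero)
    fix f x assume sum: "(\<Sum>x\<in>b ` P. cscale (f x) x) = 0" and "x \<in> b ` P"
    then obtain q where q: "q \<in> P" "x = b q" by blast
    have "0 = (\<Sum>p\<in>P. cscale (f (b p)) (b p)) (fst q) (snd q)"
      using sum by (simp add: sum.reindex[OF inj])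
    also have "\<dots> = (\<Sum>p\<in>P. f (b p) * b p (fst q) (snd q))"
      by (simp add: sum_fun_apply cscale_def)
    also have "\<dots> = (\<Sum>p\<in>P. if p = q then f x else 0)"
      using q by (intro sum.cong) (auto simp: dual)
    also have "\<dots> = f x"
      using q \<open>finite P\<close> by simp
    finally show "f x = 0" by simp
  qed (use \<open>finite P\<close> in simp)
qed

context
  fixes k :: "nat \<Rightarrow> real" and i t :: nat
  assumes i: "i \<in> {1,2,3}" and t: "t_param (k i) = enat t"
begin

lemma dunkl_coeff_eq_0_iff: "dunkl_coeff k i m = 0 \<longleftrightarrow> Suc (expo i m) = t"
  unfolding dunkl_coeff_def using dunkl_factor_eq_0_iff_t_param[OF t] by simp

lemma monogenic_x_iff:
  "F \<in> monogenic_x k i n \<longleftrightarrow>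
     (\<forall>j m. F j m \<noteq> 0 \<longrightarrow> j < 2 \<and> deg m = n \<and> t \<le> expo i m) \<and> Dirac k F = 0"
  using t by (auto simp: monogenic_x_def monogenic_def spin_hom_def zero_fun_def)

lemma monogenic_extension_layer:
  "expo i m = t \<Longrightarrow> monogenic_extension k i t n g j m = (if j < 2 \<and> deg m = n then g j m else 0)"
  by (simp add: monogenic_extension_def)

lemma Dirac_monogenic_extension: "Dirac k (monogenic_extension k i t n g) = 0"
proof -
  let ?E = "monogenic_extension k i t n g"
  have Dirac_lt_2: "Dirac k ?E j m = 0" if j: "j < 2" for j m
  proof (cases "Suc (deg m) = n \<and> t \<le> expo i m")
    case False
    have "dunkl_coeff k l m = 0 \<or> (\<forall>j<2. ?E j (incr l m) = 0)" if "l \<in> {1,2,3}" for l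
      using False expo_incr[OF i that, of m] dunkl_coeff_eq_0_iff[of m]
      by (auto simp: monogenic_extension_def deg_incr split: if_splits)
    then show ?thesis by (rule Dirac_eq_0_if_neighbours_vanish)
  next
    case True
    define l where "l = expo i m - t"
    have E_other: "?E j (incr l' m) = propagate k i g l j (incr l' m)"
      if "l' \<in> {1,2,3}" "l' \<noteq> i" "j < 2" for l' j
      using True that expo_incr[OF i that(1)] by (simp add: monogenic_extension_def deg_incr l_def)
    have "?E j (incr i m) = dirac_solve k i ?E m j" if "j < 2" for j
    proof -
      have "?E j (incr i m) = dirac_solve k i (propagate k i g l) m j"
        using True that i expo_incr[OF i i, of m]
        by (simp add: monogenic_extension_def deg_incr decr_incr l_def Suc_diff_le)
      also have "\<dots> = dirac_solve k i ?E m j"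
        by (rule fun_cong[OF dirac_solve_cong], rule E_other[symmetric])
      finally show ?thesis .
    qed
    moreover have "dunkl_coeff k i m \<noteq> 0"
      using True dunkl_coeff_eq_0_iff by simp
    ultimately show ?thesis
      using Dirac_eq_0_iff_dirac_solve[OF i] j by blast
  qed
  moreover have "Dirac k ?E j m = 0" if "2 \<le> j" for j m
    using that by (simp add: Dirac_eq_sum pauli_ge_2)
  ultimately show ?thesis
    by (intro ext) (metis not_less zero_fun_apply)
qed

lemma monogenic_extension_in_monogenic_x: "monogenic_extension k i t n g \<in> monogenic_x k i n"
  unfolding monogenic_x_iff
  by (intro conjI Dirac_monogenic_extension) (simp add: monogenic_extension_def)

lemma monogenic_x_eq_0_if_layer_vanishes:
  assumes F: "F \<in> monogenic_x k i n" and layer: "\<And>j m. expo i m = t \<Longrightarrow> F j m = 0"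
  shows "F = 0"
proof -
  have supp: "F j m \<noteq> 0 \<Longrightarrow> j < 2 \<and> t \<le> expo i m" for j m
    using F unfolding monogenic_x_iff by blast
  have "F j m = 0" if "expo i m = t + l" for l j m
    using that
  proof (induction l arbitrary: j m)
    case 0
    then show ?case by (simp add: layer)
  next
    case (Suc l)
    define m' where "m' = decr i m"
    have m: "m = incr i m'"
      using Suc.prems incr_decr[OF i] by (simp add: m'_def)
    then have m': "expo i m' = t + l"
      using Suc.prems expo_incr[OF i i, of m'] by simp
    have "dunkl_coeff k i m' \<noteq> 0"
      using m' dunkl_coeff_eq_0_iff by simp
    moreover have "\<forall>j<2. Dirac k F j m' = 0"
      using F by (simp add: monogenic_x_iff)
    ultimately have "\<forall>j<2. F j m = dirac_solve k i F m' j"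
      using Dirac_eq_0_iff_dirac_solve[OF i] m by blast
    also have "dirac_solve k i F m' = dirac_solve k i (\<lambda>_ _. 0) m'"
      using Suc.IH expo_incr[OF i] m' by (intro dirac_solve_cong) auto
    finally show ?case using supp by fastforce
  qed
  then show ?thesis
    using supp by (metis le_add_diff_inverse zero_fun_def ext)
qed

lemma cdim_monogenic_x:
  assumes "t \<le> n"
  shows "cdim (monogenic_x k i n) = 2 * (n - t + 1)"
proof -
  define P where "P = {(j, m). j < (2::nat) \<and> deg m = n \<and> expo i m = t}"
  define b where "b p = monogenic_extension k i t n (\<lambda>j m. if (j, m) = p then 1 else 0)" for p
  have P_eq: "P = {0, 1} \<times> {m. deg m = n \<and> expo i m = t}"
    by (auto simp: P_def)
  have "finite {m. deg m = n \<and> expo i m = t}"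
    using card_deg_expo_eq[OF i assms] by (intro card_ge_0_finite) simp
  then have fin: "finite P"
    by (simp add: P_eq)
  have card: "card P = 2 * (n - t + 1)"
    by (simp add: P_eq card_cartesian_product card_deg_expo_eq[OF i assms])
  have b_layer: "expo i m = t \<Longrightarrow> b p j m = (if (j, m) = p \<and> (j, m) \<in> P then 1 else 0)" for p j m
    by (auto simp: b_def monogenic_extension_layer P_def)
  have b_in: "b ` P \<subseteq> monogenic_x k i n"
    by (auto simp: b_def monogenic_extension_in_monogenic_x)
  have dual: "b p (fst q) (snd q) = (if p = q then 1 else 0)" if "p \<in> P" "q \<in> P" for p q
  proof -
    have "expo i (snd q) = t"
      using that(2) by (cases q) (simp add: P_def)
    then show ?thesis
      using that b_layer[of "snd q" p "fst q"] by auto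
  qed
  have "F \<in> spin.span (b ` P)" if F: "F \<in> monogenic_x k i n" for F
  proof -
    define S where "S = (\<Sum>p\<in>P. cscale (F (fst p) (snd p)) (b p))"
    have S_span: "S \<in> spin.span (b ` P)"
      unfolding S_def by (intro spin.span_sum spin.span_scale spin.span_base) auto
    have "F - S = 0"
    proof (rule monogenic_x_eq_0_if_layer_vanishes)
      show "F - S \<in> monogenic_x k i n"
        using S_span spin.span_minimal[OF b_in subspace_monogenic_x] F
        by (blast intro: spin.subspace_diff[OF subspace_monogenic_x])
      fix j m assume m: "expo i m = t"
      have "S j m = (\<Sum>p\<in>P. F (fst p) (snd p) * b p j m)"
        by (simp add: S_def sum_fun_apply cscale_def)
      also have "\<dots> = (\<Sum>p\<in>P. if p = (j, m) then F j m else 0)"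
        using m by (intro sum.cong) (auto simp: b_layer)
      also have "\<dots> = F j m"
      proof -
        have "F j m \<noteq> 0 \<Longrightarrow> j < 2 \<and> deg m = n"
          using F unfolding monogenic_x_iff by blast
        then show ?thesis
          using fin m by (auto simp: P_def)
      qed
      finally show "(F - S) j m = 0" by simp
    qed
    then show ?thesis using S_span by simp
  qed
  then have "cdim (monogenic_x k i n) = card (b ` P)"
    unfolding cdim_def
    using independent_if_dual_points(2)[OF fin dual] b_in by (intro spin.dim_unique) auto
  also have "\<dots> = 2 * (n - t + 1)"
    using card_image[OF independent_if_dual_points(1)[OF fin dual]] card by simp
  finally show ?thesis .
qed

end

lemma monogenic_x_subset_zero:
  assumes "i \<in> {1,2,3}" and "enat n < t_param (k i)"
  shows "monogenic_x k i n \<subseteq> {0}"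
proof
  fix F assume F: "F \<in> monogenic_x k i n"
  have "F j m = 0" for j m
  proof (rule ccontr)
    assume nz: "F j m \<noteq> 0"
    then have "deg m = n"
      using F unfolding monogenic_x_def monogenic_def spin_hom_def by blast
    have "t_param (k i) \<le> enat (expo i m)"
      using F nz unfolding monogenic_x_def by blast
    also have "\<dots> \<le> enat n"
      using expo_le_deg[OF assms(1), of m] \<open>deg m = n\<close> by simp
    finally show False
      using assms(2) by simp
  qed
  then show "F \<in> {0}" by (simp add: fun_eq_iff)
qed

theorem proposition3p3:
  fixes k :: "nat \<Rightarrow> real" and n i :: nat
  assumes "i \<in> {1, 2, 3}"
  shows "(enat n < t_param (k i) \<longrightarrow> cdim (monogenic_x k i n) = 0) \<and>
         (t_param (k i) \<le> enat n \<longrightarrow>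
            cdim (monogenic_x k i n) = 2 * (n - the_enat (t_param (k i)) + 1))"
proof (intro conjI impI)
  assume "enat n < t_param (k i)"
  then show "cdim (monogenic_x k i n) = 0"
    using cdim_eq_0 monogenic_x_subset_zero[OF assms] by blast
next
  assume "t_param (k i) \<le> enat n"
  then obtain t where t: "t_param (k i) = enat t" and "t \<le> n"
    by (cases "t_param (k i)") auto
  then show "cdim (monogenic_x k i n) = 2 * (n - the_enat (t_param (k i)) + 1)"
    using cdim_monogenic_x[where k = k and i = i, OF assms t] by simp
qed

end
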